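(* Consider the mining game with $N\ge2$ miners, costs $0<c_1\le\dots\le c_N$, reward $R>0$ and capacity $\gamma\ge0$, at parameter values where the number $n$ of active miners does not change under small perturbations of the parameters. For an active miner $i$, $$\frac{\partial h_i^*}{\partial\gamma}=\Delta^{(\gamma)}_{i,1}+\Delta^{(\gamma)}_{i,2},\quad \Delta^{(\gamma)}_{i,1}<0,\quad \Delta^{(\gamma)}_{i,2}>0\iff \frac{h_i^*}{H^*}<\frac12,$$ $$\frac{\partial h_i^*}{\partial R}=\Delta^{(R)}_{i,1}+\Delta^{(R)}_{i,2}>0,\quad \Delta^{(R)}_{i,1}>0,\quad \Delta^{(R)}_{i,2}<0\iff \frac{h_i^*}{H^*}<\frac12.$$ Furthermore, the derivatives $\frac{\partial}{\partial\gamma}\frac{h_i^*}{H^*}$ and $\frac{\partial}{\partial R}\frac{h_i^*}{H^*}$ are increasing in $i$ for $1\le i\le n$.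
   Context: Mining game: $N\ge2$ miners with costs-per-hash $0<c_1\le\dots\le c_N$; each miner $i$ chooses $h_i\ge0$, $H=\sum_j h_j$, payoff $\frac{h_i}{H}R-c_ih_i-\frac{\gamma}{2}h_i^2$ if $H>0$ and $0$ if $H=0$, with $R>0$, $\gamma\ge0$. The pure Nash equilibrium $h^*$ is unique; its active miners ($h_i^*>0$) are $1,\dots,n$ for some $2\le n\le N$, and with $c^{(n)}=\sum_{i=1}^nc_i$ one has $H^*=g(c_1,\dots,c_n,\gamma,R):=\frac{\sqrt{(c^{(n)})^2+4(n-1)R\gamma}-c^{(n)}}{2\gamma}$ for $\gamma>0$ (and $(n-1)R/c^{(n)}$ for $\gamma=0$), and $h_i^*=f_i(c_i,\gamma,R,H^* )$ for $i\le n$ where $f_i(c,\gamma,R,x):=x\frac{R-cx}{R+\gamma x^2}$. Derivatives are of these closed forms with $n$ held fixed. Definitions: $\Delta^{(\gamma)}_{i,1}:=\frac{\partial f_i}{\partial\gamma}$ and $\Delta^{(R)}_{i,1}:=\frac{\partial f_i}{\partial R}$ (with the fourth argument $x=H^*$ held fixed), $\Delta^{(\gamma)}_{i,2}:=\frac{\partial f_i}{\partial x}\big|_{x=H^*}\frac{\partial g}{\partial\gamma}$ and $\Delta^{(R)}_{i,2}:=\frac{\partial f_i}{\partial x}\big|_{x=H^*}\frac{\partial g}{\partial R}$. A sequence is increasing if $x_i\le x_{i+1}$ for all $i$. *)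

theory Defs
  imports "HOL-Analysis.Analysis"
begin

text \<open>Miners are indexed 1..N; costs c :: nat => real; a hash profile h :: nat => real
  (only the values on {1..N} matter).\<close>

definition total_hash :: "nat \<Rightarrow> (nat \<Rightarrow> real) \<Rightarrow> real" where
  "total_hash N h = (\<Sum>j=1..N. h j)"

definition payoff :: "nat \<Rightarrow> (nat \<Rightarrow> real) \<Rightarrow> real \<Rightarrow> real \<Rightarrow> nat \<Rightarrow> (nat \<Rightarrow> real) \<Rightarrow> real" where
  "payoff N c gamma R i h =
     (if total_hash N h > 0
      then h i / total_hash N h * R - c i * h i - gamma / 2 * (h i)\<^sup>2
      else 0)"

definition is_NE :: "nat \<Rightarrow> (nat \<Rightarrow> real) \<Rightarrow> real \<Rightarrow> real \<Rightarrow> (nat \<Rightarrow> real) \<Rightarrow> bool" where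
  "is_NE N c gamma R h \<longleftrightarrow>
     (\<forall>i\<in>{1..N}. 0 \<le> h i \<and>
        (\<forall>x\<ge>0. payoff N c gamma R i (h(i := x)) \<le> payoff N c gamma R i h))"

definition csum :: "nat \<Rightarrow> (nat \<Rightarrow> real) \<Rightarrow> real" where
  "csum n c = (\<Sum>i=1..n. c i)"

text \<open>Closed form g(c_1,...,c_n,gamma,R) of the total hash rate H*.\<close>
definition g_fun :: "nat \<Rightarrow> (nat \<Rightarrow> real) \<Rightarrow> real \<Rightarrow> real \<Rightarrow> real" where
  "g_fun n c gamma R =
     (if gamma = 0 then (real n - 1) * R / csum n c
      else (sqrt ((csum n c)\<^sup>2 + 4 * (real n - 1) * R * gamma) - csum n c) / (2 * gamma))"

definition f_fun :: "real \<Rightarrow> real \<Rightarrow> real \<Rightarrow> real \<Rightarrow> real" where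
  "f_fun cc gamma R x = x * (R - cc * x) / (R + gamma * x\<^sup>2)"

definition hstar :: "nat \<Rightarrow> (nat \<Rightarrow> real) \<Rightarrow> real \<Rightarrow> real \<Rightarrow> nat \<Rightarrow> real" where
  "hstar n c gamma R i = f_fun (c i) gamma R (g_fun n c gamma R)"

definition profile :: "nat \<Rightarrow> (nat \<Rightarrow> real) \<Rightarrow> real \<Rightarrow> real \<Rightarrow> nat \<Rightarrow> real" where
  "profile n c gamma R = (\<lambda>i. if 1 \<le> i \<and> i \<le> n then hstar n c gamma R i else 0)"

end

theory Submission
  imports Defs
begin

text \<open>
  H* is the positive root of gamma H^2 + c^(n) H = (n - 1) R. Implicit differentiation gives
  dH*/dgamma = -H*^2 / S < 0 and dH*/dR = (n - 1) / S > 0 with S = 2 gamma H* + c^(n), and the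
  chain rule splits the derivative of h_i* = f_i(c_i, gamma, R, H*) into the direct effect
  Delta_i1 and the effect Delta_i2 through H*. Because h_i*/H* = (R - c_i H*)/(R + gamma H*^2),
  the factor df_i/dx = R (R - gamma x^2 - 2 c_i x)/(R + gamma x^2)^2 at x = H* is negative exactly
  when h_i*/H* < 1/2, which gives the signs of Delta_i2. Finally the share
  h_k*/H* = R/(R + gamma H*^2) - c_k H*/(R + gamma H*^2) is affine in c_k, and H*/(R + gamma H*^2)
  decreases in gamma and in R, so the derivatives of the shares increase with c_k, hence with k.
\<close>

definition quad_root :: "real \<Rightarrow> real \<Rightarrow> real \<Rightarrow> real" where
  "quad_root a b q = (if a = 0 then q / b else (sqrt (b\<^sup>2 + 4 * a * q) - b) / (2 * a))"

lemma quad_root_sqrt: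
  assumes "0 \<le> b"
  shows "2 * a * quad_root a b q + b = sqrt (b\<^sup>2 + 4 * a * q)"
  using assms by (simp add: quad_root_def)

lemma quad_root_equation:
  assumes "0 < b" "0 \<le> b\<^sup>2 + 4 * a * q"
  shows "a * (quad_root a b q)\<^sup>2 + b * quad_root a b q = q"
proof (cases "a = 0")
  case False
  define x where "x = quad_root a b q"
  have "(2 * a * x + b)\<^sup>2 = b\<^sup>2 + 4 * a * q"
    using quad_root_sqrt[of b a q] assms by (simp add: x_def)
  then have "4 * a * (a * x\<^sup>2 + b * x) = 4 * a * q"
    by (simp add: algebra_simps power2_eq_square)
  then show ?thesis using False by (simp add: x_def)
qed (use assms in \<open>simp add: quad_root_def\<close>)

lemma quad_root_eq_frac:
  assumes "0 < b" "0 \<le> b\<^sup>2 + 4 * a * q"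
  shows "quad_root a b q = 2 * q / (sqrt (b\<^sup>2 + 4 * a * q) + b)"
proof -
  define x where "x = quad_root a b q"
  have "x * (sqrt (b\<^sup>2 + 4 * a * q) + b) = 2 * (a * x\<^sup>2 + b * x)"
    unfolding quad_root_sqrt[of b a q, symmetric, OF less_imp_le[OF assms(1)]] x_def
    by (simp add: algebra_simps power2_eq_square)
  also have "\<dots> = 2 * q" using quad_root_equation[OF assms] by (simp add: x_def)
  finally have "x * (sqrt (b\<^sup>2 + 4 * a * q) + b) = 2 * q" .
  moreover have "0 < sqrt (b\<^sup>2 + 4 * a * q) + b"
    using assms by (simp add: add_nonneg_pos)
  ultimately show ?thesis
    by (simp add: x_def eq_divide_eq)
qed

lemma quad_root_pos:
  assumes "0 < b" "0 < q" "0 \<le> a"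
  shows "0 < quad_root a b q"
  using assms by (simp add: quad_root_eq_frac add_nonneg_pos)

lemma quad_root_has_derivative_rhs:
  assumes "0 < b" "0 < b\<^sup>2 + 4 * a * q"
  shows "((\<lambda>y. quad_root a b y) has_real_derivative 1 / (2 * a * quad_root a b q + b)) (at q)"
proof (cases "a = 0")
  case True
  then show ?thesis using assms(1) by (auto simp: quad_root_def intro!: derivative_eq_intros)
next
  case False
  have "((\<lambda>y. (sqrt (b\<^sup>2 + 4 * a * y) - b) / (2 * a)) has_real_derivative
      1 / sqrt (b\<^sup>2 + 4 * a * q)) (at q)"
    using assms False by (auto intro!: derivative_eq_intros simp: field_simps)
  then show ?thesis
    using False by (simp add: quad_root_def quad_root_sqrt[OF less_imp_le[OF assms(1)]])
qed

lemma quad_root_has_derivative_coeff: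
  assumes "0 < b" "0 < b\<^sup>2 + 4 * a * q"
  shows "((\<lambda>t. quad_root t b q) has_real_derivative
           - (quad_root a b q)\<^sup>2 / (2 * a * quad_root a b q + b)) (at a)"
proof -
  define S where "S = sqrt (b\<^sup>2 + 4 * a * q)"
  have "0 < S" using assms(2) by (simp add: S_def)
  then have "S + b \<noteq> 0" using assms(1) by simp
  \<comment> \<open>Near a the root equals 2 q / (sqrt (b^2 + 4 t q) + b), which has no case split at t = 0.\<close>
  have "((\<lambda>t. 2 * q / (sqrt (b\<^sup>2 + 4 * t * q) + b)) has_real_derivative
      - (4 * q\<^sup>2) / (S * (S + b)\<^sup>2)) (at a)"
    using assms \<open>0 < S\<close> \<open>S + b \<noteq> 0\<close> unfolding S_def
    by (auto intro!: derivative_eq_intros simp: field_simps power2_eq_square)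
  moreover have "- (4 * q\<^sup>2) / (S * (S + b)\<^sup>2)
      = - (quad_root a b q)\<^sup>2 / (2 * a * quad_root a b q + b)"
  proof -
    have denom: "2 * a * quad_root a b q + b = S"
      unfolding S_def using assms(1) by (rule quad_root_sqrt[OF less_imp_le])
    have frac: "quad_root a b q = 2 * q / (S + b)"
      unfolding S_def using assms by (simp add: quad_root_eq_frac)
    show ?thesis
      unfolding denom unfolding frac using \<open>0 < S\<close> \<open>S + b \<noteq> 0\<close>
      by (simp add: field_simps power2_eq_square)
  qed
  moreover have "open {t. 0 < b\<^sup>2 + 4 * t * q}"
    by (intro open_Collect_less continuous_intros)
  ultimately show ?thesis
    using assms by (auto elim!: has_field_derivative_transform_within_open simp: quad_root_eq_frac)
qed

definition f_fun_dgamma :: "real \<Rightarrow> real \<Rightarrow> real \<Rightarrow> real \<Rightarrow> real" where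
  "f_fun_dgamma c gamma R x = - (x ^ 3 * (R - c * x)) / (R + gamma * x\<^sup>2)\<^sup>2"

definition f_fun_dR :: "real \<Rightarrow> real \<Rightarrow> real \<Rightarrow> real \<Rightarrow> real" where
  "f_fun_dR c gamma R x = x\<^sup>2 * (gamma * x + c) / (R + gamma * x\<^sup>2)\<^sup>2"

definition f_fun_dx :: "real \<Rightarrow> real \<Rightarrow> real \<Rightarrow> real \<Rightarrow> real" where
  "f_fun_dx c gamma R x = R * (R - gamma * x\<^sup>2 - 2 * c * x) / (R + gamma * x\<^sup>2)\<^sup>2"

lemma f_fun_denominator_pos:
  fixes R gamma x :: real
  shows "0 < R \<Longrightarrow> 0 \<le> gamma \<Longrightarrow> 0 < R + gamma * x\<^sup>2"
  by (simp add: add_pos_nonneg)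

lemma f_fun_chain_rule:
  assumes "(\<Gamma> has_real_derivative \<Gamma>') (at t)" "(\<rho> has_real_derivative \<rho>') (at t)"
    and "(G has_real_derivative G') (at t)"
    and nz: "\<rho> t + \<Gamma> t * (G t)\<^sup>2 \<noteq> 0"
  shows "((\<lambda>s. f_fun c (\<Gamma> s) (\<rho> s) (G s)) has_real_derivative
           f_fun_dgamma c (\<Gamma> t) (\<rho> t) (G t) * \<Gamma>' + f_fun_dR c (\<Gamma> t) (\<rho> t) (G t) * \<rho>'
           + f_fun_dx c (\<Gamma> t) (\<rho> t) (G t) * G') (at t)"
proof -
  define x gamma R D where "x = G t" and "gamma = \<Gamma> t" and "R = \<rho> t"
    and "D = R + gamma * x\<^sup>2"
  have "((\<lambda>s. f_fun c (\<Gamma> s) (\<rho> s) (G s)) has_real_derivative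
      (- (x ^ 3 * (R - c * x)) * \<Gamma>' + x\<^sup>2 * (gamma * x + c) * \<rho>'
       + R * (R - gamma * x\<^sup>2 - 2 * c * x) * G') / (D * D)) (at t)"
    unfolding f_fun_def x_def gamma_def R_def D_def using assms
    by (auto intro!: derivative_eq_intros simp: algebra_simps power2_eq_square power3_eq_cube)
  then show ?thesis
    unfolding f_fun_dgamma_def f_fun_dR_def f_fun_dx_def
      x_def[symmetric] gamma_def[symmetric] R_def[symmetric] D_def[symmetric]
    by (simp add: power2_eq_square add_divide_distrib diff_divide_distrib)
qed

lemma f_fun_has_derivative_gamma:
  "R + gamma * x\<^sup>2 \<noteq> 0 \<Longrightarrow>
    ((\<lambda>t. f_fun c t R x) has_real_derivative f_fun_dgamma c gamma R x) (at gamma)"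
  using f_fun_chain_rule[of "\<lambda>t. t" 1 gamma "\<lambda>_. R" 0 "\<lambda>_. x" 0 c] by simp

lemma f_fun_has_derivative_R:
  "R + gamma * x\<^sup>2 \<noteq> 0 \<Longrightarrow>
    ((\<lambda>r. f_fun c gamma r x) has_real_derivative f_fun_dR c gamma R x) (at R)"
  using f_fun_chain_rule[of "\<lambda>_. gamma" 0 R "\<lambda>r. r" 1 "\<lambda>_. x" 0 c] by simp

lemma f_fun_has_derivative_x:
  "R + gamma * x\<^sup>2 \<noteq> 0 \<Longrightarrow>
    ((\<lambda>y. f_fun c gamma R y) has_real_derivative f_fun_dx c gamma R x) (at x)"
  using f_fun_chain_rule[of "\<lambda>_. gamma" 0 x "\<lambda>_. R" 0 "\<lambda>y. y" 1 c] by simp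

lemma f_fun_div_self:
  "x \<noteq> 0 \<Longrightarrow> f_fun c gamma R x / x = R / (R + gamma * x\<^sup>2) - c * (x / (R + gamma * x\<^sup>2))"
  by (simp add: f_fun_def diff_divide_distrib)

lemma f_fun_pos_iff:
  "0 < x \<Longrightarrow> 0 < R + gamma * x\<^sup>2 \<Longrightarrow> 0 < f_fun c gamma R x \<longleftrightarrow> c * x < R"
  by (simp add: f_fun_def zero_less_divide_iff zero_less_mult_iff)

lemma f_fun_dgamma_neg:
  "0 < x \<Longrightarrow> c * x < R \<Longrightarrow> R + gamma * x\<^sup>2 \<noteq> 0 \<Longrightarrow> f_fun_dgamma c gamma R x < 0"
  by (simp add: f_fun_dgamma_def)

lemma f_fun_dR_pos:
  "0 < f_fun_dR c gamma R x" if "0 < x" "0 \<le> gamma" "0 < c" "0 < R"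
  using f_fun_denominator_pos[of R gamma x] that by (simp add: f_fun_dR_def add_nonneg_pos)

lemma f_fun_dx_neg_iff:
  assumes "0 < x" "0 < R" "0 < R + gamma * x\<^sup>2"
  shows "f_fun_dx c gamma R x < 0 \<longleftrightarrow> f_fun c gamma R x / x < 1 / 2"
proof -
  have "f_fun_dx c gamma R x < 0 \<longleftrightarrow> R - gamma * x\<^sup>2 - 2 * c * x < 0"
    using assms by (simp add: f_fun_dx_def divide_less_0_iff mult_less_0_iff)
  also have "\<dots> \<longleftrightarrow> (R - c * x) / (R + gamma * x\<^sup>2) < 1 / 2"
    using assms by (simp add: field_simps)
  finally show ?thesis
    using assms by (simp add: f_fun_div_self diff_divide_distrib)
qed

lemma deriv_f_fun_div_self:
  assumes "(\<Gamma> has_real_derivative \<Gamma>') (at t)" "(\<rho> has_real_derivative \<rho>') (at t)"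
    and G: "(G has_real_derivative G') (at t)" "G t \<noteq> 0"
    and nz: "\<rho> t + \<Gamma> t * (G t)\<^sup>2 \<noteq> 0"
  shows "deriv (\<lambda>s. f_fun c (\<Gamma> s) (\<rho> s) (G s) / G s) t =
           deriv (\<lambda>s. \<rho> s / (\<rho> s + \<Gamma> s * (G s)\<^sup>2)) t
           - c * deriv (\<lambda>s. G s / (\<rho> s + \<Gamma> s * (G s)\<^sup>2)) t"
proof -
  define D where "D s = \<rho> s + \<Gamma> s * (G s)\<^sup>2" for s
  have "(D has_real_derivative \<rho>' + (\<Gamma>' * (G t)\<^sup>2 + \<Gamma> t * (2 * G t * G'))) (at t)"
    unfolding D_def using assms by (auto intro!: derivative_eq_intros)
  note D' = this nz[folded D_def]
  note P = DERIV_divide[OF assms(2) D'] and Q = DERIV_divide[OF G(1) D']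
  obtain d where "0 < d" and G_ne: "\<forall>s. dist t s < d \<longrightarrow> G s \<noteq> 0"
    using continuous_at_avoid[OF DERIV_isCont[OF G(1)] G(2)] by blast
  have "((\<lambda>s. \<rho> s / D s - c * (G s / D s)) has_real_derivative
      deriv (\<lambda>s. \<rho> s / D s) t - c * deriv (\<lambda>s. G s / D s) t) (at t)"
    using DERIV_diff[OF P DERIV_cmult[OF Q]]
    by (simp add: DERIV_imp_deriv[OF P] DERIV_imp_deriv[OF Q])
  then have "((\<lambda>s. f_fun c (\<Gamma> s) (\<rho> s) (G s) / G s) has_real_derivative
      deriv (\<lambda>s. \<rho> s / D s) t - c * deriv (\<lambda>s. G s / D s) t) (at t)"
    by (rule has_field_derivative_transform_within[OF _ \<open>0 < d\<close>])
      (use G_ne in \<open>auto simp: f_fun_div_self D_def dist_commute\<close>)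
  then show ?thesis
    unfolding D_def by (rule DERIV_imp_deriv)
qed

lemma f_fun_dR_plus_dx_pos:
  assumes x: "0 < x" and gamma: "0 \<le> gamma" and b: "0 < b" and c: "0 \<le> c"
    and R: "0 < R" "c * x < R"
    and root: "gamma * x\<^sup>2 + b * x = m * R"
  shows "0 < f_fun_dR c gamma R x + f_fun_dx c gamma R x * (m / (2 * gamma * x + b))"
proof -
  define S D where "S = 2 * gamma * x + b" and "D = R + gamma * x\<^sup>2"
  have "0 < S" "0 < D"
    using x gamma b R by (simp_all add: S_def D_def add_nonneg_pos add_pos_nonneg)
  have "(f_fun_dR c gamma R x + f_fun_dx c gamma R x * (m / S)) * (D\<^sup>2 * S)
      = x\<^sup>2 * (gamma * x + c) * S + m * R * (R - gamma * x\<^sup>2 - 2 * c * x)"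
    using \<open>0 < S\<close> \<open>0 < D\<close> unfolding f_fun_dR_def f_fun_dx_def D_def[symmetric]
    by (simp add: field_simps)
  also have "\<dots> = gamma * x ^ 3 * (gamma * x + c) + x * (gamma * x + b) * (R - c * x)"
    unfolding root[symmetric] S_def D_def
    by (simp add: algebra_simps power2_eq_square power3_eq_cube)
  also have "\<dots> > 0"
    using x gamma b c R by (intro add_nonneg_pos) (simp_all add: add_nonneg_pos)
  finally have "0 < (f_fun_dR c gamma R x + f_fun_dx c gamma R x * (m / S)) * (D\<^sup>2 * S)" .
  moreover have "0 < D\<^sup>2 * S" using \<open>0 < S\<close> \<open>0 < D\<close> by simp
  ultimately show ?thesis
    unfolding S_def[symmetric] by (rule zero_less_mult_pos2)
qed

lemma g_fun_eq_quad_root: "g_fun n c gamma R = quad_root gamma (csum n c) ((real n - 1) * R)"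
  by (simp add: g_fun_def quad_root_def mult_ac)

context
  fixes n :: nat and c :: "nat \<Rightarrow> real" and gamma R :: real
  assumes csum_pos: "0 < csum n c" and n2: "2 \<le> n" and R_pos: "0 < R" and gamma_nonneg: "0 \<le> gamma"
begin

lemma g_fun_discriminant_pos: "0 < (csum n c)\<^sup>2 + 4 * gamma * ((real n - 1) * R)"
  using csum_pos n2 R_pos gamma_nonneg by (simp add: add_pos_nonneg)

lemma g_fun_pos: "0 < g_fun n c gamma R"
  unfolding g_fun_eq_quad_root using csum_pos n2 R_pos gamma_nonneg by (simp add: quad_root_pos)

lemma g_fun_equation:
  "gamma * (g_fun n c gamma R)\<^sup>2 + csum n c * g_fun n c gamma R = (real n - 1) * R"
  unfolding g_fun_eq_quad_root
  using quad_root_equation[OF csum_pos less_imp_le[OF g_fun_discriminant_pos]] .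

lemma g_fun_has_derivative_gamma:
  "((\<lambda>t. g_fun n c t R) has_real_derivative
     - (g_fun n c gamma R)\<^sup>2 / (2 * gamma * g_fun n c gamma R + csum n c)) (at gamma)"
  unfolding g_fun_eq_quad_root
  using quad_root_has_derivative_coeff[OF csum_pos g_fun_discriminant_pos] .

lemma g_fun_has_derivative_R:
  "((\<lambda>r. g_fun n c gamma r) has_real_derivative
     (real n - 1) / (2 * gamma * g_fun n c gamma R + csum n c)) (at R)"
  unfolding g_fun_eq_quad_root
  using DERIV_chain2[OF quad_root_has_derivative_rhs[OF csum_pos g_fun_discriminant_pos]
      DERIV_cmult[OF DERIV_ident, of "real n - 1" R]]
  by simp

lemma deriv_hstar_div_g_fun_gamma_mono:
  assumes "c k \<le> c k'"
  shows "deriv (\<lambda>t. hstar n c t R k / g_fun n c t R) gamma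
           \<le> deriv (\<lambda>t. hstar n c t R k' / g_fun n c t R) gamma"
proof -
  define H S D where "H = g_fun n c gamma R" and "S = 2 * gamma * H + csum n c"
    and "D = R + gamma * H\<^sup>2"
  define Q where "Q = (\<lambda>t. g_fun n c t R / (R + t * (g_fun n c t R)\<^sup>2))"
  have "0 < H" "0 < S" "0 < D"
    using g_fun_pos csum_pos gamma_nonneg f_fun_denominator_pos[OF R_pos gamma_nonneg]
    by (simp_all add: H_def S_def D_def add_nonneg_pos)
  have share: "deriv (\<lambda>t. hstar n c t R j / g_fun n c t R) gamma
      = deriv (\<lambda>t. R / (R + t * (g_fun n c t R)\<^sup>2)) gamma - c j * deriv Q gamma" for j
    using deriv_f_fun_div_self[of "\<lambda>t. t" 1 gamma "\<lambda>_. R" 0 "\<lambda>t. g_fun n c t R", OF _ _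
        g_fun_has_derivative_gamma, of "c j"] g_fun_pos \<open>0 < D\<close>
    by (simp add: hstar_def Q_def H_def D_def)
  have "(Q has_real_derivative
      (- H\<^sup>2 / S * D - H * (H\<^sup>2 + gamma * (2 * H * (- H\<^sup>2 / S)))) / (D * D)) (at gamma)"
    unfolding Q_def H_def S_def D_def using g_fun_has_derivative_gamma \<open>0 < D\<close>
    by (auto intro!: derivative_eq_intros simp: H_def D_def)
  moreover have "- H\<^sup>2 / S * D - H * (H\<^sup>2 + gamma * (2 * H * (- H\<^sup>2 / S)))
      = - (H\<^sup>2 * (R + gamma * H\<^sup>2 + csum n c * H)) / S"
  proof -
    have "(- H\<^sup>2 / S * D - H * (H\<^sup>2 + gamma * (2 * H * (- H\<^sup>2 / S)))) * S
        = - H\<^sup>2 * D - H ^ 3 * S + 2 * gamma * H ^ 4"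
      using \<open>0 < S\<close> by (simp add: field_simps power2_eq_square power3_eq_cube power4_eq_xxxx)
    also have "\<dots> = - (H\<^sup>2 * (R + gamma * H\<^sup>2 + csum n c * H))"
      unfolding S_def D_def
      by (simp add: algebra_simps power2_eq_square power3_eq_cube power4_eq_xxxx)
    finally show ?thesis
      using \<open>0 < S\<close> by (intro eq_divide_imp) auto
  qed
  moreover have "0 \<le> R + gamma * H\<^sup>2 + csum n c * H"
    using \<open>0 < D\<close> \<open>0 < H\<close> csum_pos unfolding D_def by simp
  ultimately have "deriv Q gamma \<le> 0"
    using \<open>0 < S\<close> by (simp add: DERIV_imp_deriv divide_nonpos_pos)
  then show ?thesis
    unfolding share using assms by (simp add: mult_right_mono_neg)
qed

lemma deriv_hstar_div_g_fun_R_mono: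
  assumes "c k \<le> c k'"
  shows "deriv (\<lambda>r. hstar n c gamma r k / g_fun n c gamma r) R
           \<le> deriv (\<lambda>r. hstar n c gamma r k' / g_fun n c gamma r) R"
proof -
  define m H S D where "m = real n - 1" and "H = g_fun n c gamma R"
    and "S = 2 * gamma * H + csum n c" and "D = R + gamma * H\<^sup>2"
  define Q where "Q = (\<lambda>r. g_fun n c gamma r / (r + gamma * (g_fun n c gamma r)\<^sup>2))"
  have "0 < H" "0 < S" "0 < D" "0 < m"
    using g_fun_pos csum_pos gamma_nonneg f_fun_denominator_pos[OF R_pos gamma_nonneg] n2
    by (simp_all add: m_def H_def S_def D_def add_nonneg_pos)
  have share: "deriv (\<lambda>r. hstar n c gamma r j / g_fun n c gamma r) R
      = deriv (\<lambda>r. r / (r + gamma * (g_fun n c gamma r)\<^sup>2)) R - c j * deriv Q R" for j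
    using deriv_f_fun_div_self[of "\<lambda>_. gamma" 0 R "\<lambda>r. r" 1 "\<lambda>r. g_fun n c gamma r", OF _ _
        g_fun_has_derivative_R, of "c j"] g_fun_pos \<open>0 < D\<close>
    by (simp add: hstar_def Q_def H_def D_def)
  have "(Q has_real_derivative (m / S * D - H * (1 + gamma * (2 * H * (m / S)))) / (D * D)) (at R)"
    unfolding Q_def m_def H_def S_def D_def using g_fun_has_derivative_R \<open>0 < D\<close>
    by (auto intro!: derivative_eq_intros simp: H_def D_def)
  moreover have "m / S * D - H * (1 + gamma * (2 * H * (m / S))) = - (gamma * H\<^sup>2 * (m + 1)) / S"
  proof -
    have "(m / S * D - H * (1 + gamma * (2 * H * (m / S)))) * S
        = m * D - H * S - 2 * gamma * H\<^sup>2 * m"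
      using \<open>0 < S\<close> by (simp add: field_simps power2_eq_square)
    also have "\<dots> = - (gamma * H\<^sup>2 * (m + 1)) + (m * R - (gamma * H\<^sup>2 + csum n c * H))"
      unfolding S_def D_def by (simp add: algebra_simps power2_eq_square)
    also have "\<dots> = - (gamma * H\<^sup>2 * (m + 1))"
      using g_fun_equation by (simp add: m_def H_def)
    finally show ?thesis
      using \<open>0 < S\<close> by (intro eq_divide_imp) auto
  qed
  ultimately have "deriv Q R \<le> 0"
    using \<open>0 < S\<close> \<open>0 < m\<close> gamma_nonneg by (simp add: DERIV_imp_deriv divide_nonpos_pos)
  then show ?thesis
    unfolding share using assms by (simp add: mult_right_mono_neg)
qed

lemma hstar_pos_iff: "0 < hstar n c gamma R k \<longleftrightarrow> c k * g_fun n c gamma R < R"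
  unfolding hstar_def
  using f_fun_pos_iff[OF g_fun_pos f_fun_denominator_pos[OF R_pos gamma_nonneg]] .

lemma hstar_comparative_statics_gamma:
  assumes cost: "c k * g_fun n c gamma R < R"
  defines "H \<equiv> g_fun n c gamma R"
  shows "((\<lambda>t. hstar n c t R k) has_real_derivative
           deriv (\<lambda>t. f_fun (c k) t R H) gamma
           + deriv (f_fun (c k) gamma R) H * deriv (\<lambda>t. g_fun n c t R) gamma) (at gamma)"
    and "deriv (\<lambda>t. f_fun (c k) t R H) gamma < 0"
    and "0 < deriv (f_fun (c k) gamma R) H * deriv (\<lambda>t. g_fun n c t R) gamma
           \<longleftrightarrow> hstar n c gamma R k / H < 1 / 2"
proof -
  have "0 < H" "0 < R + gamma * H\<^sup>2"
    using g_fun_pos f_fun_denominator_pos[OF R_pos gamma_nonneg] by (simp_all add: H_def)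
  then have derivs: "deriv (\<lambda>t. f_fun (c k) t R H) gamma = f_fun_dgamma (c k) gamma R H"
      "deriv (f_fun (c k) gamma R) H = f_fun_dx (c k) gamma R H"
    by (simp_all add: DERIV_imp_deriv f_fun_has_derivative_gamma
        f_fun_has_derivative_x)
  show "((\<lambda>t. hstar n c t R k) has_real_derivative
      deriv (\<lambda>t. f_fun (c k) t R H) gamma
      + deriv (f_fun (c k) gamma R) H * deriv (\<lambda>t. g_fun n c t R) gamma) (at gamma)"
    using f_fun_chain_rule[of "\<lambda>t. t" 1 gamma "\<lambda>_. R" 0 "\<lambda>t. g_fun n c t R", OF _ _
        g_fun_has_derivative_gamma, of "c k"] \<open>0 < R + gamma * H\<^sup>2\<close>
    unfolding derivs by (simp add: hstar_def H_def DERIV_imp_deriv[OF g_fun_has_derivative_gamma])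
  show "deriv (\<lambda>t. f_fun (c k) t R H) gamma < 0"
    unfolding derivs using f_fun_dgamma_neg \<open>0 < H\<close> \<open>0 < R + gamma * H\<^sup>2\<close> cost
    by (simp add: H_def)
  have "deriv (\<lambda>t. g_fun n c t R) gamma < 0"
    using DERIV_imp_deriv[OF g_fun_has_derivative_gamma] \<open>0 < H\<close> csum_pos gamma_nonneg
    by (simp add: H_def add_nonneg_pos)
  then show "0 < deriv (f_fun (c k) gamma R) H * deriv (\<lambda>t. g_fun n c t R) gamma
      \<longleftrightarrow> hstar n c gamma R k / H < 1 / 2"
    using f_fun_dx_neg_iff[OF \<open>0 < H\<close> R_pos \<open>0 < R + gamma * H\<^sup>2\<close>]
    unfolding derivs by (simp add: hstar_def H_def zero_less_mult_iff)
qed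

lemma hstar_comparative_statics_R:
  assumes c_pos: "0 < c k" and cost: "c k * g_fun n c gamma R < R"
  defines "H \<equiv> g_fun n c gamma R"
  shows "((\<lambda>r. hstar n c gamma r k) has_real_derivative
           deriv (\<lambda>r. f_fun (c k) gamma r H) R
           + deriv (f_fun (c k) gamma R) H * deriv (g_fun n c gamma) R) (at R)"
    and "0 < deriv (\<lambda>r. f_fun (c k) gamma r H) R
           + deriv (f_fun (c k) gamma R) H * deriv (g_fun n c gamma) R"
    and "0 < deriv (\<lambda>r. f_fun (c k) gamma r H) R"
    and "deriv (f_fun (c k) gamma R) H * deriv (g_fun n c gamma) R < 0
           \<longleftrightarrow> hstar n c gamma R k / H < 1 / 2"
proof -
  have "0 < H" "0 < R + gamma * H\<^sup>2"
    using g_fun_pos f_fun_denominator_pos[OF R_pos gamma_nonneg] by (simp_all add: H_def)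
  then have derivs: "deriv (\<lambda>r. f_fun (c k) gamma r H) R = f_fun_dR (c k) gamma R H"
      "deriv (f_fun (c k) gamma R) H = f_fun_dx (c k) gamma R H"
      "deriv (g_fun n c gamma) R = (real n - 1) / (2 * gamma * H + csum n c)"
    using DERIV_imp_deriv[OF g_fun_has_derivative_R]
    by (simp_all add: DERIV_imp_deriv f_fun_has_derivative_R
        f_fun_has_derivative_x H_def)
  show "((\<lambda>r. hstar n c gamma r k) has_real_derivative
      deriv (\<lambda>r. f_fun (c k) gamma r H) R
      + deriv (f_fun (c k) gamma R) H * deriv (g_fun n c gamma) R) (at R)"
    using f_fun_chain_rule[of "\<lambda>_. gamma" 0 R "\<lambda>r. r" 1 "\<lambda>r. g_fun n c gamma r", OF _ _
        g_fun_has_derivative_R, of "c k"] \<open>0 < R + gamma * H\<^sup>2\<close>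
    unfolding derivs by (simp add: hstar_def H_def)
  show "0 < deriv (\<lambda>r. f_fun (c k) gamma r H) R
      + deriv (f_fun (c k) gamma R) H * deriv (g_fun n c gamma) R"
    unfolding derivs using c_pos cost
    by (intro f_fun_dR_plus_dx_pos[OF \<open>0 < H\<close> gamma_nonneg csum_pos _ R_pos])
      (simp_all add: H_def g_fun_equation)
  show "0 < deriv (\<lambda>r. f_fun (c k) gamma r H) R"
    unfolding derivs using f_fun_dR_pos[OF \<open>0 < H\<close> gamma_nonneg c_pos R_pos] .
  have "0 < deriv (g_fun n c gamma) R"
    unfolding derivs using n2 \<open>0 < H\<close> csum_pos gamma_nonneg by (simp add: add_nonneg_pos)
  then show "deriv (f_fun (c k) gamma R) H * deriv (g_fun n c gamma) R < 0
      \<longleftrightarrow> hstar n c gamma R k / H < 1 / 2"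
    using f_fun_dx_neg_iff[OF \<open>0 < H\<close> R_pos \<open>0 < R + gamma * H\<^sup>2\<close>]
    unfolding derivs(2) by (simp add: hstar_def H_def mult_less_0_iff)
qed

end

theorem proposition4p6:
  fixes N n :: nat and c :: "nat \<Rightarrow> real" and gamma R :: real and i :: nat
  assumes N2: "2 \<le> N"
    and cpos: "0 < c 1"
    and cmono: "\<forall>k. 1 \<le> k \<and> k < N \<longrightarrow> c k \<le> c (Suc k)"
    and Rpos: "0 < R"
    and gnn: "0 \<le> gamma"
    and n_range: "2 \<le> n" "n \<le> N"
    and eq_here: "is_NE N c gamma R (profile n c gamma R)"
    and active_here: "\<forall>k\<in>{1..n}. 0 < hstar n c gamma R k"
    and stable: "\<exists>e>0. \<forall>gamma' R'. 0 \<le> gamma' \<longrightarrow> 0 < R' \<longrightarrow>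
                   \<bar>gamma' - gamma\<bar> < e \<longrightarrow> \<bar>R' - R\<bar> < e \<longrightarrow>
                   is_NE N c gamma' R' (profile n c gamma' R') \<and>
                   (\<forall>k\<in>{1..n}. 0 < hstar n c gamma' R' k)"
    and i_active: "1 \<le> i" "i \<le> n"
  shows
    "let H = g_fun n c gamma R;
         h = hstar n c gamma R i;
         Dg1 = deriv (\<lambda>t. f_fun (c i) t R H) gamma;
         Dg2 = deriv (\<lambda>x. f_fun (c i) gamma R x) H * deriv (\<lambda>t. g_fun n c t R) gamma;
         DR1 = deriv (\<lambda>r. f_fun (c i) gamma r H) R;
         DR2 = deriv (\<lambda>x. f_fun (c i) gamma R x) H * deriv (\<lambda>r. g_fun n c gamma r) R
     in ((\<lambda>t. hstar n c t R i) has_real_derivative (Dg1 + Dg2)) (at gamma)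
        \<and> Dg1 < 0
        \<and> (Dg2 > 0 \<longleftrightarrow> h / H < 1/2)
        \<and> ((\<lambda>r. hstar n c gamma r i) has_real_derivative (DR1 + DR2)) (at R)
        \<and> DR1 + DR2 > 0
        \<and> DR1 > 0
        \<and> (DR2 < 0 \<longleftrightarrow> h / H < 1/2)
        \<and> (\<forall>k. 1 \<le> k \<and> k < n \<longrightarrow>
              deriv (\<lambda>t. hstar n c t R k / g_fun n c t R) gamma
                \<le> deriv (\<lambda>t. hstar n c t R (Suc k) / g_fun n c t R) gamma)
        \<and> (\<forall>k. 1 \<le> k \<and> k < n \<longrightarrow>
              deriv (\<lambda>r. hstar n c gamma r k / g_fun n c gamma r) R
                \<le> deriv (\<lambda>r. hstar n c gamma r (Suc k) / g_fun n c gamma r) R)"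
proof -
  have c_pos: "0 < c k" if "1 \<le> k" "k \<le> n" for k
  proof -
    have "c 1 \<le> c k"
      by (rule lift_Suc_mono_le_ivl[of "{1..<N}"]) (use that n_range cmono in auto)
    with cpos show ?thesis by simp
  qed
  have csum_pos: "0 < csum n c"
    unfolding csum_def using n_range c_pos by (intro sum_pos) auto
  note game = csum_pos n_range(1) Rpos gnn
  have cost: "c i * g_fun n c gamma R < R"
    using active_here i_active hstar_pos_iff[OF game] by simp
  have c_mono: "c k \<le> c (Suc k)" if "1 \<le> k \<and> k < n" for k
    using that cmono n_range by simp
  show ?thesis
    unfolding Let_def
    using hstar_comparative_statics_gamma[OF game cost]
      hstar_comparative_statics_R[OF game c_pos[OF i_active] cost]
      deriv_hstar_div_g_fun_gamma_mono[OF game c_mono] deriv_hstar_div_g_fun_R_mono[OF game c_mono]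
    by blast
qed

end
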